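(* Let $f$ be as in the standing setting and suppose $f$ satisfies quadratic functional growth with constant $\kappa_f>0$: $$f(x)-f^*\ge\frac{\kappa_f}{2}\|x-\bar x\|^2\qquad\forall x\in X.$$ Let $\mu_f=\kappa_f/L_f$. Then $f$ satisfies the global error bound $$\|g(x)\|\ge\frac{\kappa_f}{1+\mu_f+\sqrt{1+\mu_f}}\,\|x-\bar x\|\qquad\forall x\in X.$$
   Context: Standing setting: $X\subseteq\mathbb{R}^n$ is a nonempty closed convex set; $f:X\to\mathbb{R}$ is convex and continuously differentiable, with $L_f$-Lipschitz continuous gradient on $X$ ($L_f>0$). Consider $f^*=\min_{x\in X}f(x)$ with optimal set $X^*$ nonempty and closed and $f^*$ finite. $\|\cdot\|$ is the Euclidean norm, $[u]_S$ is the Euclidean projection onto a closed convex set $S$, and $\bar x=[x]_{X^*}$. The gradient mapping is $g(x)=L_f\big(x-x^+\big)$ with $x^+=[x-\frac1{L_f}\nabla f(x)]_X$. *)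

theory Defs
  imports "HOL-Analysis.Analysis"
begin

definition grad_map :: "'a::euclidean_space set \<Rightarrow> ('a \<Rightarrow> 'a) \<Rightarrow> real \<Rightarrow> 'a \<Rightarrow> 'a" where
  "grad_map X gradf L x = L *\<^sub>R (x - closest_point X (x - (1 / L) *\<^sub>R gradf x))"

end

theory Submission
  imports Defs
begin

text \<open>
  Write \<open>x\<^sup>+\<close> for the projected gradient step, \<open>r = \<parallel>x - x\<^sup>+\<parallel>\<close> (so \<open>\<parallel>g(x)\<parallel> = L r\<close>),
  \<open>d = \<parallel>x - x\<^sub>*\<parallel>\<close> and \<open>d\<^sup>+ = \<parallel>x\<^sup>+ - x\<^sup>+\<^sub>*\<parallel>\<close>, where \<open>x\<^sub>*\<close> and \<open>x\<^sup>+\<^sub>*\<close> are the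
  projections of \<open>x\<close> and \<open>x\<^sup>+\<close> onto the optimal set.
  The descent lemma, the gradient inequality of convexity and the variational
  inequality of the projection give the classical bound
  \<open>f(x\<^sup>+) \<le> f(y) + L\<langle>x - x\<^sup>+, x - y\<rangle> - L r\<^sup>2/2\<close> for every \<open>y \<in> X\<close>; with \<open>y = x\<^sub>*\<close>
  and quadratic growth at \<open>x\<^sup>+\<close> this yields \<open>\<kappa>/2 (d\<^sup>+)\<^sup>2 \<le> L r d - L r\<^sup>2/2\<close>.
  Together with \<open>d \<le> r + d\<^sup>+\<close> this is a quadratic inequality forcing
  \<open>(s - 1) d \<le> s r\<close> for \<open>s = \<surd>(1 + \<kappa>/L)\<close>, which is the claimed error bound.
\<close>

lemma has_real_derivative_along_line:
  fixes f :: "'a::euclidean_space \<Rightarrow> real"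
  assumes "(f has_derivative (\<lambda>h. G \<bullet> h)) (at (x + t *\<^sub>R v))"
  shows "((\<lambda>s. f (x + s *\<^sub>R v)) has_real_derivative (G \<bullet> v)) (at t)"
proof -
  have "((\<lambda>s. x + s *\<^sub>R v) has_derivative (\<lambda>h. h *\<^sub>R v)) (at t)"
    by (auto intro!: derivative_eq_intros)
  from has_derivative_compose[OF this assms]
  have "((\<lambda>s. f (x + s *\<^sub>R v)) has_derivative (\<lambda>h. G \<bullet> (h *\<^sub>R v))) (at t)"
    by (simp add: o_def)
  moreover have "(\<lambda>h. G \<bullet> (h *\<^sub>R v)) = (*) (G \<bullet> v)"
    by (rule ext) (simp add: mult.commute)
  ultimately show ?thesis
    by (simp add: has_field_derivative_def)
qed

lemma convex_on_gradient_inequality: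
  fixes f :: "'a::euclidean_space \<Rightarrow> real"
  assumes "convex_on X f" and "x \<in> X" and "y \<in> X"
    and "(f has_derivative (\<lambda>h. G \<bullet> h)) (at x)"
  shows "f x + G \<bullet> (y - x) \<le> f y"
proof -
  define \<psi> where "\<psi> = (\<lambda>s. f (x + s *\<^sub>R (y - x)))"
  have "(\<psi> has_real_derivative (G \<bullet> (y - x))) (at 0)"
    unfolding \<psi>_def by (rule has_real_derivative_along_line) (use assms(4) in simp)
  hence "((\<lambda>t. (\<psi> t - \<psi> 0) / (t - 0)) \<longlongrightarrow> G \<bullet> (y - x)) (at_right 0)"
    by (auto simp: has_field_derivative_iff intro: filterlim_mono at_le)
  moreover have "\<forall>\<^sub>F t in at_right 0. (\<psi> t - \<psi> 0) / (t - 0) \<le> f y - f x"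
    using eventually_at_right_real[OF zero_less_one]
  proof eventually_elim
    case (elim t)
    have "(1 - t) *\<^sub>R x + t *\<^sub>R y = x + t *\<^sub>R (y - x)"
      by (simp add: algebra_simps)
    with convex_onD[OF assms(1), of t x y] elim assms(2,3)
    have "\<psi> t - \<psi> 0 \<le> t * (f y - f x)"
      unfolding \<psi>_def by (simp add: algebra_simps)
    with elim show ?case
      by (simp add: divide_le_eq mult.commute)
  qed
  ultimately have "G \<bullet> (y - x) \<le> f y - f x"
    by (rule tendsto_upperbound) simp
  thus ?thesis by simp
qed

lemma lipschitz_gradient_descent_lemma:
  fixes f :: "'a::euclidean_space \<Rightarrow> real"
  assumes "convex X" and x: "x \<in> X" and y: "y \<in> X"
    and deriv: "\<And>z. z \<in> X \<Longrightarrow> (f has_derivative (\<lambda>h. gradf z \<bullet> h)) (at z)"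
    and lip: "\<And>u v. u \<in> X \<Longrightarrow> v \<in> X \<Longrightarrow> norm (gradf u - gradf v) \<le> L * norm (u - v)"
    and "L \<ge> 0"
  shows "f y \<le> f x + gradf x \<bullet> (y - x) + L / 2 * (norm (y - x))\<^sup>2"
proof -
  define p where "p = (\<lambda>t::real. x + t *\<^sub>R (y - x))"
  have p_in: "p t \<in> X" if "0 \<le> t" "t \<le> 1" for t
    using convexD_alt[OF assms(1) x y, of t] that by (simp add: p_def algebra_simps)
  define \<phi> where "\<phi> = (\<lambda>t. f (p t) - t * (gradf x \<bullet> (y - x)) - L / 2 * t\<^sup>2 * (norm (y - x))\<^sup>2)"
  define \<phi>' where "\<phi>' = (\<lambda>t. gradf (p t) \<bullet> (y - x) - gradf x \<bullet> (y - x) - L * t * (norm (y - x))\<^sup>2)"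
  have "(\<phi> has_real_derivative \<phi>' t) (at t)" if "0 \<le> t" "t \<le> 1" for t
  proof -
    have "((\<lambda>s. f (p s)) has_real_derivative (gradf (p t) \<bullet> (y - x))) (at t)"
      unfolding p_def
      by (rule has_real_derivative_along_line) (use deriv p_in[OF that] in \<open>simp add: p_def\<close>)
    then show ?thesis
      unfolding \<phi>_def \<phi>'_def by (auto intro!: derivative_eq_intros)
  qed
  then obtain t where t: "0 < t" "t < 1" and mvt: "\<phi> 1 - \<phi> 0 = \<phi>' t"
    using MVT2[of 0 1 \<phi> \<phi>'] by auto
  have "(gradf (p t) - gradf x) \<bullet> (y - x) \<le> norm (gradf (p t) - gradf x) * norm (y - x)"
    by (rule norm_cauchy_schwarz)
  also have "\<dots> \<le> L * norm (p t - x) * norm (y - x)"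
    by (rule mult_right_mono[OF lip]) (use p_in t x in auto)
  also have "norm (p t - x) = t * norm (y - x)"
    using t by (simp add: p_def)
  finally have "\<phi>' t \<le> 0"
    unfolding \<phi>'_def by (simp add: inner_diff_left power2_eq_square algebra_simps)
  with mvt show ?thesis
    by (simp add: \<phi>_def p_def)
qed

lemma projected_gradient_step_bound:
  fixes f :: "'a::euclidean_space \<Rightarrow> real"
  assumes X: "closed X" "convex X" and x: "x \<in> X" and y: "y \<in> X"
    and convex: "convex_on X f"
    and deriv: "\<And>z. z \<in> X \<Longrightarrow> (f has_derivative (\<lambda>h. gradf z \<bullet> h)) (at z)"
    and lip: "\<And>u v. u \<in> X \<Longrightarrow> v \<in> X \<Longrightarrow> norm (gradf u - gradf v) \<le> L * norm (u - v)"
    and L: "L > 0"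
  defines "x' \<equiv> closest_point X (x - (1 / L) *\<^sub>R gradf x)"
  shows "f x' \<le> f y + L * ((x - x') \<bullet> (x - y)) - L / 2 * (norm (x - x'))\<^sup>2"
proof -
  have x'_in: "x' \<in> X"
    unfolding x'_def using closest_point_in_set X x by blast
  have "(x - (1 / L) *\<^sub>R gradf x - x') \<bullet> (y - x') \<le> 0"
    unfolding x'_def by (rule closest_point_dot[OF X(2,1) y])
  hence "(x - x') \<bullet> (y - x') \<le> (1 / L) * (gradf x \<bullet> (y - x'))"
    by (simp add: inner_diff_left algebra_simps)
  hence "L * ((x - x') \<bullet> (y - x')) \<le> gradf x \<bullet> (y - x')"
    using L by (simp add: field_simps)
  moreover have "L * ((x - x') \<bullet> (y - x')) = L * (norm (x - x'))\<^sup>2 - L * ((x - x') \<bullet> (x - y))"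
    by (simp add: power2_norm_eq_inner inner_diff_right algebra_simps)
  moreover have "gradf x \<bullet> (y - x') = gradf x \<bullet> (y - x) - gradf x \<bullet> (x' - x)"
    by (simp add: inner_diff_right)
  moreover have "f x' \<le> f x + gradf x \<bullet> (x' - x) + L / 2 * (norm (x - x'))\<^sup>2"
    using lipschitz_gradient_descent_lemma[OF X(2) x x'_in deriv lip] L
    by (simp add: norm_minus_commute)
  moreover have "f x + gradf x \<bullet> (y - x) \<le> f y"
    by (rule convex_on_gradient_inequality[OF convex x y deriv[OF x]])
  ultimately show ?thesis
    by (simp add: field_simps)
qed

lemma norm_closest_point_triangle:
  fixes S :: "'a::euclidean_space set"
  assumes "closed S" "S \<noteq> {}"
  shows "norm (x - closest_point S x) \<le> norm (x - y) + norm (y - closest_point S y)"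
proof -
  have "norm (x - closest_point S x) \<le> norm (x - closest_point S y)"
    using closest_point_le[OF assms(1) closest_point_in_set[OF assms]] by (simp add: dist_norm)
  also have "\<dots> \<le> norm (x - y) + norm (y - closest_point S y)"
    by (rule norm_diff_triangle_le[of _ y]) simp_all
  finally show ?thesis .
qed

lemma error_bound_of_growth_inequality:
  fixes L \<kappa> r d d' :: real
  assumes L: "L > 0" and \<kappa>: "\<kappa> > 0" and "r \<ge> 0" "d \<ge> 0" "d' \<ge> 0"
    and triangle: "d \<le> r + d'" and growth: "\<kappa> / 2 * d'\<^sup>2 \<le> L * r * d - L * r\<^sup>2 / 2"
  shows "\<kappa> / (1 + \<kappa> / L + sqrt (1 + \<kappa> / L)) * d \<le> L * r"
proof -
  define s where "s = sqrt (1 + \<kappa> / L)"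
  have s: "s \<ge> 1" "s\<^sup>2 = 1 + \<kappa> / L"
    using L \<kappa> by (simp_all add: s_def)
  have "1 + \<kappa> / L + sqrt (1 + \<kappa> / L) = s * (s + 1)"
    using s(2) by (simp add: s_def[symmetric] power2_eq_square algebra_simps)
  moreover have "\<kappa> = L * (s - 1) * (s + 1)"
    using s(2) L by (simp add: power2_eq_square algebra_simps)
  ultimately have coeff: "\<kappa> / (1 + \<kappa> / L + sqrt (1 + \<kappa> / L)) = L * (s - 1) / s"
    using s(1) by simp
  have "(s - 1) * d \<le> s * r"
  proof (cases "d \<le> r")
    case True
    then show ?thesis
      using s(1) \<open>d \<ge> 0\<close> by (smt (verit) mult_left_mono mult_right_mono)
  next
    case False
    with triangle have "(d - r)\<^sup>2 \<le> d'\<^sup>2"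
      by (intro power_mono) auto
    with \<kappa> have "\<kappa> / 2 * (d - r)\<^sup>2 \<le> \<kappa> / 2 * d'\<^sup>2"
      by (intro mult_left_mono) auto
    with growth have "\<kappa> / 2 * (d - r)\<^sup>2 \<le> L * r * d - L * r\<^sup>2 / 2"
      by linarith
    hence "\<kappa> / L * (d - r)\<^sup>2 \<le> d\<^sup>2 - (d - r)\<^sup>2"
      using L by (simp add: field_simps power2_eq_square)
    moreover have "(s * (d - r))\<^sup>2 = (d - r)\<^sup>2 + \<kappa> / L * (d - r)\<^sup>2"
      by (simp only: power_mult_distrib s(2) distrib_right mult_1_left)
    ultimately have "(s * (d - r))\<^sup>2 \<le> d\<^sup>2"
      by linarith
    hence "s * (d - r) \<le> d"
      using \<open>d \<ge> 0\<close> by (rule power2_le_imp_le)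
    thus ?thesis
      by (simp add: algebra_simps)
  qed
  then have "L * ((s - 1) * d) \<le> L * (s * r)"
    using L by simp
  then show ?thesis
    unfolding coeff using s(1) by (simp add: field_simps)
qed

theorem theorem7:
  fixes X :: "'a::euclidean_space set" and f :: "'a \<Rightarrow> real" and gradf :: "'a \<Rightarrow> 'a"
    and L \<kappa> fstar :: real
  assumes X_closed: "closed X" and X_convex: "convex X" and X_ne: "X \<noteq> {}"
    and f_convex: "convex_on X f"
    and f_deriv: "\<And>x. x \<in> X \<Longrightarrow> (f has_derivative (\<lambda>h. gradf x \<bullet> h)) (at x)"
    and grad_cont: "continuous_on X gradf"
    and L_pos: "L > 0"
    and grad_lip: "\<And>x y. x \<in> X \<Longrightarrow> y \<in> X \<Longrightarrow> norm (gradf x - gradf y) \<le> L * norm (x - y)"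
    and fstar_def: "fstar = (INF x\<in>X. f x)"
    and bdd: "bdd_below (f ` X)"
    and opt_ne: "{x \<in> X. f x = fstar} \<noteq> {}"
    and kappa_pos: "\<kappa> > 0"
    and qfg: "\<And>x. x \<in> X \<Longrightarrow>
               f x - fstar \<ge> \<kappa> / 2 * (norm (x - closest_point {y \<in> X. f y = fstar} x))\<^sup>2"
  shows "\<forall>x\<in>X. norm (grad_map X gradf L x) \<ge>
           \<kappa> / (1 + \<kappa> / L + sqrt (1 + \<kappa> / L)) * norm (x - closest_point {y \<in> X. f y = fstar} x)"
proof
  fix x assume x: "x \<in> X"
  define S where "S = {y \<in> X. f y = fstar}"
  have "continuous_on X f"
    using f_deriv has_derivative_continuous continuous_at_imp_continuous_on by blast
  hence "closed S"
    unfolding S_def using X_closed by (rule continuous_closed_preimage_constant)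
  have "S \<noteq> {}"
    using opt_ne by (simp add: S_def)
  define x' where "x' = closest_point X (x - (1 / L) *\<^sub>R gradf x)"
  define r where "r = norm (x - x')"
  define d where "d = norm (x - closest_point S x)"
  define d' where "d' = norm (x' - closest_point S x')"
  have "x' \<in> X"
    unfolding x'_def using closest_point_in_set X_closed X_ne by blast
  have "closest_point S x \<in> S"
    using closest_point_in_set \<open>closed S\<close> \<open>S \<noteq> {}\<close> by blast
  hence "f x' \<le> fstar + L * ((x - x') \<bullet> (x - closest_point S x)) - L / 2 * r\<^sup>2"
    using projected_gradient_step_bound[OF X_closed X_convex x _ f_convex f_deriv grad_lip L_pos,
        of "closest_point S x"]
    by (simp add: S_def x'_def r_def)
  moreover have "L * ((x - x') \<bullet> (x - closest_point S x)) \<le> L * (r * d)"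
    using L_pos norm_cauchy_schwarz by (auto simp: r_def d_def intro: mult_left_mono)
  moreover have "\<kappa> / 2 * d'\<^sup>2 \<le> f x' - fstar"
    using qfg[OF \<open>x' \<in> X\<close>] by (simp add: d'_def S_def)
  moreover have "d \<le> r + d'"
    unfolding d_def r_def d'_def by (rule norm_closest_point_triangle[OF \<open>closed S\<close> \<open>S \<noteq> {}\<close>])
  ultimately have "\<kappa> / (1 + \<kappa> / L + sqrt (1 + \<kappa> / L)) * d \<le> L * r"
    by (intro error_bound_of_growth_inequality[OF L_pos kappa_pos]) (auto simp: r_def d_def d'_def)
  moreover have "norm (grad_map X gradf L x) = L * r"
    using L_pos by (simp add: grad_map_def r_def x'_def)
  ultimately show "\<kappa> / (1 + \<kappa> / L + sqrt (1 + \<kappa> / L)) * norm (x - closest_point {y \<in> X. f y = fstar} x)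
      \<le> norm (grad_map X gradf L x)"
    by (simp add: d_def S_def)
qed

end
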